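(* Let $f:\mathbb{R}^n\to\mathbb{R}$ be differentiable and pseudo-convex, with $\nabla f$ $L$-Lipschitz continuous ($L>0$), and assume the stationary set $X^*$ is non-empty. Let $0<h<\frac{1}{L}$, $\beta\in\left(\frac{1-\sqrt{1-h^2L^2}}{h^2L^2},1\right]$ and $\kappa_1=2\beta-1-\beta^2h^2L^2$. Then the sequence $\{x^k\}$ generated by Algorithm 1 satisfies, for every $x^*\in X^*$ and every integer $K\ge1$, $$\frac{1}{K}\sum_{k=0}^{K-1}\|\nabla f(x^k)\|^2\le \frac{\|x^0-x^*\|^2}{K\kappa_1h^2}.$$
   Context: A differentiable $f$ is pseudo-convex if $\nabla f$ is pseudo-monotone, i.e. for all $x,y$, $\langle \nabla f(x),y-x\rangle\ge 0$ implies $\langle \nabla f(y),y-x\rangle\ge0$. The stationary set is $X^*=\{x\in\mathbb{R}^n:\nabla f(x)=0\}$. Algorithm 1: given $x^0$, for $k=0,1,2,\dots$ set $z^k=x^k-h\nabla f(x^k)$ and $x^{k+1}=x^k-h\big(\nabla f(x^k)-\beta(\nabla f(x^k)-\nabla f(z^k))\big)$. *)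

theory Defs
  imports "HOL-Analysis.Analysis"
begin

definition pseudo_monotone :: "('a::real_inner \<Rightarrow> 'a) \<Rightarrow> bool" where
  "pseudo_monotone F \<longleftrightarrow>
     (\<forall>x y. F x \<bullet> (y - x) \<ge> 0 \<longrightarrow> F y \<bullet> (y - x) \<ge> 0)"

text \<open>A differentiable f with gradient G is pseudo-convex iff G is pseudo-monotone.\<close>
definition pseudo_convex_grad :: "('a::real_inner \<Rightarrow> real) \<Rightarrow> ('a \<Rightarrow> 'a) \<Rightarrow> bool" where
  "pseudo_convex_grad f G \<longleftrightarrow>
     (\<forall>x. (f has_derivative (\<lambda>v. G x \<bullet> v)) (at x)) \<and> pseudo_monotone G"

definition stationary_set :: "('a::real_inner \<Rightarrow> 'a) \<Rightarrow> 'a set" where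
  "stationary_set G = {x. G x = 0}"

fun alg1 :: "('a::real_inner \<Rightarrow> 'a) \<Rightarrow> real \<Rightarrow> real \<Rightarrow> 'a \<Rightarrow> nat \<Rightarrow> 'a" where
  "alg1 G h \<beta> x0 0 = x0"
| "alg1 G h \<beta> x0 (Suc k) =
     (let x = alg1 G h \<beta> x0 k; z = x - h *\<^sub>R G x
      in x - h *\<^sub>R (G x - \<beta> *\<^sub>R (G x - G z)))"

end

theory Submission imports Defs begin

text \<open>
  Pseudo-monotonicity tested against a stationary point \<open>x\<^sup>*\<close> gives
  \<open>\<langle>G y, y - x\<^sup>*\<rangle> \<ge> 0\<close> for every \<open>y\<close>. Used at \<open>x\<^sup>k\<close> and at the extrapolated point
  \<open>z\<^sup>k\<close>, together with \<open>\<parallel>G x\<^sup>k - G z\<^sup>k\<parallel> \<le> h L \<parallel>G x\<^sup>k\<parallel>\<close>, this makes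
  \<open>\<parallel>x\<^sup>k - x\<^sup>*\<parallel>\<^sup>2\<close> decrease by at least \<open>\<kappa>\<^sub>1 h\<^sup>2 \<parallel>G x\<^sup>k\<parallel>\<^sup>2\<close> per step; the bound
  follows by telescoping. The lower bound on \<open>\<beta>\<close> is exactly the condition \<open>\<kappa>\<^sub>1 > 0\<close>.
\<close>

lemma pseudo_monotone_inner_stationary_nonneg:
  assumes "pseudo_monotone G" and "G xs = 0"
  shows "G y \<bullet> (y - xs) \<ge> 0"
  using assms unfolding pseudo_monotone_def by (metis inner_zero_left order_refl)

lemma extragradient_step_dist_decrease:
  fixes G :: "'a::real_inner \<Rightarrow> 'a" and x xs :: 'a
  assumes pm: "pseudo_monotone G" and Gxs: "G xs = 0"
    and lip: "\<And>x y. norm (G x - G y) \<le> L * norm (x - y)"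
    and h0: "h \<ge> 0" and \<beta>0: "\<beta> \<ge> 0" and \<beta>1: "\<beta> \<le> 1"
  defines "z \<equiv> x - h *\<^sub>R G x"
  shows "(norm (x - h *\<^sub>R (G x - \<beta> *\<^sub>R (G x - G z)) - xs))\<^sup>2
           \<le> (norm (x - xs))\<^sup>2 - (2*\<beta> - 1 - \<beta>\<^sup>2*h\<^sup>2*L\<^sup>2) * h\<^sup>2 * (norm (G x))\<^sup>2"
proof -
  define g where "g = G x"
  define u where "u = x - xs"
  have at_x: "g \<bullet> u \<ge> 0"
    using pseudo_monotone_inner_stationary_nonneg[OF pm Gxs] by (simp add: g_def u_def)
  have "G z \<bullet> (u - h *\<^sub>R g) \<ge> 0"
    using pseudo_monotone_inner_stationary_nonneg[OF pm Gxs, of z]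
    by (simp add: z_def g_def u_def algebra_simps)
  then have at_z: "G z \<bullet> u \<ge> h * (G z \<bullet> g)"
    by (simp add: inner_diff_right)
  have "norm (g - G z) \<le> L * h * norm g"
    using lip[of x z] h0 by (simp add: z_def g_def mult.assoc)
  then have "(norm (g - G z))\<^sup>2 \<le> (L * h * norm g)\<^sup>2"
    by (simp add: power_mono)
  then have diff_sq: "(g - G z) \<bullet> (g - G z) \<le> L\<^sup>2 * h\<^sup>2 * (g \<bullet> g)"
    by (simp add: power2_norm_eq_inner power_mult_distrib)
  have "x - h *\<^sub>R (G x - \<beta> *\<^sub>R (G x - G z)) - xs
          = u - h *\<^sub>R ((1 - \<beta>) *\<^sub>R g + \<beta> *\<^sub>R G z)"
    by (simp add: u_def g_def algebra_simps)
  then have "(norm (x - h *\<^sub>R (G x - \<beta> *\<^sub>R (G x - G z)) - xs))\<^sup>2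
      = (norm (u - h *\<^sub>R ((1 - \<beta>) *\<^sub>R g + \<beta> *\<^sub>R G z)))\<^sup>2"
    by (simp only:)
  also have "\<dots> = u \<bullet> u - 2*h*(1 - \<beta>)*(g \<bullet> u) - 2*h*\<beta>*(G z \<bullet> u)
        + h\<^sup>2 * ((1 - 2*\<beta>)*(g \<bullet> g) + 2*\<beta>*(G z \<bullet> g) + \<beta>\<^sup>2*((g - G z) \<bullet> (g - G z)))"
    unfolding power2_norm_eq_inner
    by (simp add: inner_diff_left inner_diff_right inner_add_left inner_add_right
        inner_commute algebra_simps power2_eq_square)
  also have "\<dots> \<le> u \<bullet> u - h\<^sup>2*(2*\<beta>*(G z \<bullet> g))
        + h\<^sup>2 * ((1 - 2*\<beta>)*(g \<bullet> g) + 2*\<beta>*(G z \<bullet> g) + \<beta>\<^sup>2*(L\<^sup>2 * h\<^sup>2 * (g \<bullet> g)))"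
  proof -
    have "h\<^sup>2*(2*\<beta>*(G z \<bullet> g)) \<le> 2*h*\<beta>*(G z \<bullet> u)"
      using mult_left_mono[OF at_z, of "2*h*\<beta>"] h0 \<beta>0 by (simp add: power2_eq_square ac_simps)
    moreover have "0 \<le> 2*h*(1 - \<beta>)*(g \<bullet> u)"
      using at_x h0 \<beta>1 by simp
    moreover have "h\<^sup>2*(\<beta>\<^sup>2*((g - G z) \<bullet> (g - G z))) \<le> h\<^sup>2*(\<beta>\<^sup>2*(L\<^sup>2 * h\<^sup>2 * (g \<bullet> g)))"
      using diff_sq by (simp add: mult_left_mono)
    ultimately show ?thesis
      unfolding distrib_left by linarith
  qed
  also have "\<dots> = (norm (x - xs))\<^sup>2 - (2*\<beta> - 1 - \<beta>\<^sup>2*h\<^sup>2*L\<^sup>2) * h\<^sup>2 * (norm (G x))\<^sup>2"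
    by (simp add: u_def g_def power2_norm_eq_inner algebra_simps)
  finally show ?thesis .
qed

lemma kappa_pos:
  fixes L h \<beta> :: real
  assumes Lpos: "L > 0" and hpos: "0 < h" and hL: "h < 1 / L"
    and \<beta>lo: "(1 - sqrt (1 - h\<^sup>2 * L\<^sup>2)) / (h\<^sup>2 * L\<^sup>2) < \<beta>" and \<beta>hi: "\<beta> \<le> 1"
  shows "2 * \<beta> - 1 - \<beta>\<^sup>2 * h\<^sup>2 * L\<^sup>2 > 0"
proof -
  define a where "a = h\<^sup>2 * L\<^sup>2"
  have a0: "a > 0" using Lpos hpos by (simp add: a_def)
  have "h * L < 1" using hL Lpos by (simp add: field_simps)
  then have "(h * L)\<^sup>2 < 1" using Lpos hpos by (simp add: power_less_one_iff)
  then have a1: "a < 1" by (simp add: a_def power_mult_distrib)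
  define s where "s = sqrt (1 - a)"
  have s0: "s \<ge> 0" and ss: "s\<^sup>2 = 1 - a" using a1 by (auto simp: s_def)
  have "1 - s < a * \<beta>"
    using \<beta>lo a0 by (simp add: a_def s_def pos_divide_less_eq mult.commute)
  moreover have "a * \<beta> \<le> 1" using \<beta>hi a1 a0 by (smt (verit) mult_left_le)
  ultimately have "(1 - a * \<beta>)\<^sup>2 < s\<^sup>2" using s0 by (intro power_strict_mono) auto
  then have "a * (a * \<beta>\<^sup>2 - 2 * \<beta> + 1) < 0" using ss by (simp add: power2_eq_square algebra_simps)
  then have "a * \<beta>\<^sup>2 - 2 * \<beta> + 1 < 0" using a0 by (simp add: mult_less_0_iff)
  then show ?thesis by (simp add: a_def algebra_simps)
qed

lemma alg1_sum_grad_norm_bound: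
  fixes G :: "'a::real_inner \<Rightarrow> 'a"
  assumes pm: "pseudo_monotone G" and Gxs: "G xs = 0"
    and lip: "\<And>x y. norm (G x - G y) \<le> L * norm (x - y)"
    and h0: "h \<ge> 0" and \<beta>0: "\<beta> \<ge> 0" and \<beta>1: "\<beta> \<le> 1"
  shows "(2*\<beta> - 1 - \<beta>\<^sup>2*h\<^sup>2*L\<^sup>2) * h\<^sup>2 * (\<Sum>k<N. (norm (G (alg1 G h \<beta> x0 k)))\<^sup>2)
           \<le> (norm (x0 - xs))\<^sup>2 - (norm (alg1 G h \<beta> x0 N - xs))\<^sup>2"
proof (induction N)
  case 0
  then show ?case by simp
next
  case (Suc N)
  then show ?case
    using extragradient_step_dist_decrease[OF pm Gxs lip h0 \<beta>0 \<beta>1, of "alg1 G h \<beta> x0 N"]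
    by (simp add: Let_def algebra_simps)
qed

theorem theorem2:
  fixes f :: "real ^ 'n \<Rightarrow> real" and G :: "real ^ 'n \<Rightarrow> real ^ 'n"
    and L h \<beta> :: real and x0 xs :: "real ^ 'n" and K :: nat
  assumes pc: "pseudo_convex_grad f G"
    and Lpos: "L > 0"
    and lip: "\<And>x y. norm (G x - G y) \<le> L * norm (x - y)"
    and nonempty: "stationary_set G \<noteq> {}"
    and hpos: "0 < h" and hL: "h < 1 / L"
    and \<beta>lo: "(1 - sqrt (1 - h^2 * L^2)) / (h^2 * L^2) < \<beta>" and \<beta>hi: "\<beta> \<le> 1"
    and xs: "xs \<in> stationary_set G"
    and K: "K \<ge> 1"
  shows "(1 / real K) * (\<Sum>k<K. (norm (G (alg1 G h \<beta> x0 k)))^2)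
           \<le> (norm (x0 - xs))^2 / (real K * (2 * \<beta> - 1 - \<beta>^2 * h^2 * L^2) * h^2)"
proof -
  define \<kappa> where "\<kappa> = 2 * \<beta> - 1 - \<beta>\<^sup>2 * h\<^sup>2 * L\<^sup>2"
  define S where "S = (\<Sum>k<K. (norm (G (alg1 G h \<beta> x0 k)))\<^sup>2)"
  have \<kappa>: "\<kappa> > 0" unfolding \<kappa>_def using kappa_pos[OF Lpos hpos hL \<beta>lo \<beta>hi] .
  then have \<beta>0: "\<beta> \<ge> 0" unfolding \<kappa>_def by (smt (verit) zero_le_power2 mult_nonneg_nonneg)
  have pm: "pseudo_monotone G" using pc by (simp add: pseudo_convex_grad_def)
  have Gxs: "G xs = 0" using xs by (simp add: stationary_set_def)
  have "\<kappa> * h\<^sup>2 * S \<le> (norm (x0 - xs))\<^sup>2 - (norm (alg1 G h \<beta> x0 K - xs))\<^sup>2"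
    using alg1_sum_grad_norm_bound[OF pm Gxs lip _ \<beta>0 \<beta>hi] hpos by (simp add: \<kappa>_def S_def)
  also have "\<dots> \<le> (norm (x0 - xs))\<^sup>2" by simp
  finally have "\<kappa> * h\<^sup>2 * S \<le> (norm (x0 - xs))\<^sup>2" .
  moreover have "real K * \<kappa> * h\<^sup>2 > 0" using K \<kappa> hpos by simp
  ultimately have "S / real K \<le> (norm (x0 - xs))\<^sup>2 / (real K * \<kappa> * h\<^sup>2)"
    by (simp add: field_simps)
  then show ?thesis by (simp add: \<kappa>_def S_def)
qed

end
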